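(* Let $(P,e)$, $P\in\mathcal{T}_k$, be a tree pattern, and let $X,Y,Y'\subseteq[k]$ be defined with respect to $(P,e)$ as below. Let $i\in X\cup Y\cup Y'$ be a non-root vertex of $P$ with $e(i)=0$, and define $e'\colon[k]\setminus\{r(P)\}\to\{0,1\}$ by $e'(i)=1$ and $e'(j)=e(j)$ for all $j\ne i$. Then $\mathcal{T}_n(P,e)=\mathcal{T}_n(P,e')$ for all $n\ge0$.
   Context: $\mathcal{T}_n$ is the set of binary trees on $n$ vertices labeled $1,\dots,n$ by the search tree property (left-subtree vertices of $i$ smaller than $i$, right-subtree vertices larger). $c_L(i),c_R(i),p(i)$: left child, right child, parent ($\varepsilon$ if nonexistent); $c_L^\ell,c_R^\ell$ denote iterates; $r(T)$ root; $L(i),R(i)$ subtrees rooted at $c_L(i),c_R(i)$. A tree pattern is $(P,e)$, $P\in\mathcal{T}_k$, $e\colon[k]\setminus\{r(P)\}\to\{0,1\}$ ($e(i)=1$: edge $(i,p(i))$ contiguous; $e(i)=0$: non-contiguous). $T\in\mathcal{T}_n$ contains $(P,e)$ if there is an injection $f\colon[k]\to[n]$ such that for every non-root $i$ of $P$: if $e(i)=1$, $f(i)$ is the left (resp. right) child of $f(p(i))$ when $i$ is the left (resp. right) child of $p(i)$; if $e(i)=0$, $f(i)\in L(f(p(i)))$ (resp. $R(f(p(i)))$) accordingly. $\mathcal{T}_n(P,e)$ is the set of $T\in\mathcal{T}_n$ avoiding $(P,e)$. For $i\in[k]$: $B_L'(i)=\{c_L^\ell(i):\ell\ge0,\ c_L^\ell(i)\text{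 exists, and } e(c_L^j(i))=1\text{ for } j=1,\dots,\ell\}$; $A_R(i)=\{a\in[k]: i=c_R^\ell(a)\text{ for some }\ell\ge0\text{ with } e(c_R^j(a))=1\text{ for } j=1,\dots,\ell\}$, and $a_R(i)$ is the topmost (closest to the root) vertex of $A_R(i)$. $B_R'(i)$, $A_L(i)$, $a_L(i)$ are defined in the same way with left and right interchanged. Then $X=\{i: c_L(i)=\varepsilon\text{ and } c_R(i)=\varepsilon\}$ (the leaves); $Y$ is the set of $i$ such that: $c_L(i)\ne\varepsilon$; $i=c_R(p(i))$; $A_R(p(i))=\{p(i)\}$ or $B_L'(i)=\{i\}$; $c_L(j)=\varepsilon$ for all $j\in A_R(p(i))$; $c_R(j)=\varepsilon$ for all $j\in B_L'(i)$; and $a_R(p(i))=r(P)$ or $e(a_R(p(i)))=0$; $Y'$ is the set of $i$ such that: $c_R(i)\ne\varepsilon$; $i=c_L(p(i))$; $A_L(p(i))=\{p(i)\}$ or $B_R'(i)=\{i\}$; $c_R(j)=\varepsilon$ for all $j\in A_L(p(i))$; $c_L(j)=\varepsilon$ for all $j\in B_R'(i)$; and $a_L(p(i))=r(P)$ or $e(a_L(p(i)))=0$. *)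

theory Defs
  imports Main "HOL-Library.Tree"
begin

text \<open>Binary trees are HOL-Library trees with natural-number labels. A tree on n
vertices labelled by the search tree property is exactly a tree whose in-order
traversal is the list 1,...,n.\<close>

definition search_trees :: "nat \<Rightarrow> nat tree set" where
  "search_trees n = {t. inorder t = [1..<n+1]}"

fun find :: "nat tree \<Rightarrow> nat \<Rightarrow> nat tree" where
  "find Leaf i = Leaf"
| "find (Node l a r) i =
     (if a = i then Node l a r else if find l i \<noteq> Leaf then find l i else find r i)"

fun root_of :: "nat tree \<Rightarrow> nat option" where
  "root_of Leaf = None"
| "root_of (Node l a r) = Some a"

definition lc :: "nat tree \<Rightarrow> nat \<Rightarrow> nat option" where
  "lc t i = (case find t i of Leaf \<Rightarrow> None | Node l _ _ \<Rightarrow> root_of l)"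

definition rc :: "nat tree \<Rightarrow> nat \<Rightarrow> nat option" where
  "rc t i = (case find t i of Leaf \<Rightarrow> None | Node _ _ r \<Rightarrow> root_of r)"

definition Lsub :: "nat tree \<Rightarrow> nat \<Rightarrow> nat set" where
  "Lsub t i = (case find t i of Leaf \<Rightarrow> {} | Node l _ _ \<Rightarrow> set_tree l)"

definition Rsub :: "nat tree \<Rightarrow> nat \<Rightarrow> nat set" where
  "Rsub t i = (case find t i of Leaf \<Rightarrow> {} | Node _ _ r \<Rightarrow> set_tree r)"

definition par :: "nat tree \<Rightarrow> nat \<Rightarrow> nat option" where
  "par t i = (if \<exists>p. lc t p = Some i \<or> rc t p = Some i
              then Some (SOME p. lc t p = Some i \<or> rc t p = Some i) else None)"

fun lcit :: "nat tree \<Rightarrow> nat \<Rightarrow> nat \<Rightarrow> nat option" where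
  "lcit t i 0 = Some i"
| "lcit t i (Suc l) = (case lcit t i l of None \<Rightarrow> None | Some j \<Rightarrow> lc t j)"

fun rcit :: "nat tree \<Rightarrow> nat \<Rightarrow> nat \<Rightarrow> nat option" where
  "rcit t i 0 = Some i"
| "rcit t i (Suc l) = (case rcit t i l of None \<Rightarrow> None | Some j \<Rightarrow> rc t j)"

text \<open>Tree patterns: a tree P and e :: nat => bool (True = contiguous edge);
only the values of e on non-root vertices of P are relevant.\<close>
definition contains :: "nat tree \<Rightarrow> nat tree \<Rightarrow> (nat \<Rightarrow> bool) \<Rightarrow> bool" where
  "contains T P e \<longleftrightarrow> (\<exists>f. inj_on f (set_tree P) \<and> f ` set_tree P \<subseteq> set_tree T \<and>
     (\<forall>j\<in>set_tree P. \<forall>p. 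
        (lc P p = Some j \<longrightarrow>
           (if e j then lc T (f p) = Some (f j) else f j \<in> Lsub T (f p))) \<and>
        (rc P p = Some j \<longrightarrow>
           (if e j then rc T (f p) = Some (f j) else f j \<in> Rsub T (f p)))))"

definition avoiders :: "nat \<Rightarrow> nat tree \<Rightarrow> (nat \<Rightarrow> bool) \<Rightarrow> nat tree set" where
  "avoiders n P e = {T \<in> search_trees n. \<not> contains T P e}"

definition BL' :: "nat tree \<Rightarrow> (nat \<Rightarrow> bool) \<Rightarrow> nat \<Rightarrow> nat set" where
  "BL' P e i = {j. \<exists>l. lcit P i l = Some j \<and> (\<forall>m\<in>{1..l}. e (the (lcit P i m)))}"

definition BR' :: "nat tree \<Rightarrow> (nat \<Rightarrow> bool) \<Rightarrow> nat \<Rightarrow> nat set" where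
  "BR' P e i = {j. \<exists>l. rcit P i l = Some j \<and> (\<forall>m\<in>{1..l}. e (the (rcit P i m)))}"

definition AR :: "nat tree \<Rightarrow> (nat \<Rightarrow> bool) \<Rightarrow> nat \<Rightarrow> nat set" where
  "AR P e i = {a \<in> set_tree P. \<exists>l. rcit P a l = Some i \<and> (\<forall>m\<in>{1..l}. e (the (rcit P a m)))}"

definition AL :: "nat tree \<Rightarrow> (nat \<Rightarrow> bool) \<Rightarrow> nat \<Rightarrow> nat set" where
  "AL P e i = {a \<in> set_tree P. \<exists>l. lcit P a l = Some i \<and> (\<forall>m\<in>{1..l}. e (the (lcit P a m)))}"

definition depth :: "nat tree \<Rightarrow> nat \<Rightarrow> nat" where
  "depth t a = card {b \<in> set_tree t. b \<noteq> a \<and> a \<in> set_tree (find t b)}"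

definition aR :: "nat tree \<Rightarrow> (nat \<Rightarrow> bool) \<Rightarrow> nat \<Rightarrow> nat" where
  "aR P e i = (ARG_MIN (depth P) a. a \<in> AR P e i)"

definition aL :: "nat tree \<Rightarrow> (nat \<Rightarrow> bool) \<Rightarrow> nat \<Rightarrow> nat" where
  "aL P e i = (ARG_MIN (depth P) a. a \<in> AL P e i)"

definition Xset :: "nat tree \<Rightarrow> nat set" where
  "Xset P = {i \<in> set_tree P. lc P i = None \<and> rc P i = None}"

definition Yset :: "nat tree \<Rightarrow> (nat \<Rightarrow> bool) \<Rightarrow> nat set" where
  "Yset P e = {i \<in> set_tree P. lc P i \<noteq> None \<and>
     (\<exists>p. par P i = Some p \<and> rc P p = Some i \<and>
        (AR P e p = {p} \<or> BL' P e i = {i}) \<and>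
        (\<forall>j\<in>AR P e p. lc P j = None) \<and>
        (\<forall>j\<in>BL' P e i. rc P j = None) \<and>
        (Some (aR P e p) = root_of P \<or> \<not> e (aR P e p)))}"

definition Y'set :: "nat tree \<Rightarrow> (nat \<Rightarrow> bool) \<Rightarrow> nat set" where
  "Y'set P e = {i \<in> set_tree P. rc P i \<noteq> None \<and>
     (\<exists>p. par P i = Some p \<and> lc P p = Some i \<and>
        (AL P e p = {p} \<or> BR' P e i = {i}) \<and>
        (\<forall>j\<in>AL P e p. rc P j = None) \<and>
        (\<forall>j\<in>BR' P e i. lc P j = None) \<and>
        (Some (aL P e p) = root_of P \<or> \<not> e (aL P e p)))}"

end

theory Submission
  imports Defs
begin

text \<open>
In trees with distinct labels a map satisfying the edge conditions of an occurrence is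
automatically injective, so it suffices to turn such a map \<open>f\<close> for \<open>(P, e)\<close> into one for
\<open>(P, e')\<close>. If \<open>i\<close> is a leaf and the right child of \<open>q\<close>, re-map \<open>i\<close> to the right child of
\<open>f q\<close>. If \<open>i \<in> Y\<close> has parent \<open>p\<close>, then \<open>f i\<close> lies in the subtree of the right child \<open>y\<close>
of \<open>f p\<close>, and \<open>f\<close> is modified until \<open>f i = y\<close>. If \<open>A\<^sub>R(p) = {p}\<close> and \<open>f i\<close> is a left
child, lift the contiguous left chain \<open>B\<^sub>L'(i)\<close> by one level; if \<open>f i\<close> is the right child
of \<open>w\<close>, re-map \<open>p\<close> to \<open>w\<close>. If \<open>B\<^sub>L'(i) = {i}\<close> and \<open>f i\<close> lies left of \<open>y\<close>, re-map \<open>i\<close>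
to \<open>y\<close>; if it lies right of \<open>y\<close>, lower the contiguous right chain \<open>A\<^sub>R(p)\<close> by one level.
Leaves that are left children and the set \<open>Y'\<close> are the mirror images of these cases; this
symmetry is why everything is proved for trees with distinct labels, a class closed under
mirroring.
\<close>

lemma find_eq_Leaf_iff: "find t x = Leaf \<longleftrightarrow> x \<notin> set_tree t"
  by (induction t) auto

lemma find_Node_self: "x \<in> set_tree t \<Longrightarrow> \<exists>l r. find t x = Node l x r"
  by (induction t) (auto simp: find_eq_Leaf_iff)

lemma find_cases:
  obtains "x \<notin> set_tree t" "find t x = Leaf"
  | l r where "x \<in> set_tree t" "find t x = Node l x r"
  using find_Node_self[of x t] find_eq_Leaf_iff[of t x] by (cases "x \<in> set_tree t") auto

lemma set_tree_find_subset: "set_tree (find t x) \<subseteq> set_tree t"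
  by (induction t) auto

lemma find_Node_left:
  "distinct (inorder (Node l a r)) \<Longrightarrow> x \<in> set_tree l \<Longrightarrow> find (Node l a r) x = find l x"
  by (auto simp: find_eq_Leaf_iff)

lemma find_Node_right:
  "distinct (inorder (Node l a r)) \<Longrightarrow> x \<in> set_tree r \<Longrightarrow> find (Node l a r) x = find r x"
  by (auto simp: find_eq_Leaf_iff)

lemma distinct_find: "distinct (inorder t) \<Longrightarrow> distinct (inorder (find t x))"
  by (induction t) auto

lemma find_find:
  "distinct (inorder t) \<Longrightarrow> y \<in> set_tree (find t x) \<Longrightarrow> find t y = find (find t x) y"
proof (induction t)
  case (Node l a r)
  then show ?case using set_tree_find_subset[of l x] set_tree_find_subset[of r x]
    by (auto simp: find_eq_Leaf_iff split: if_splits)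
qed simp

lemma find_in_left:
  assumes "distinct (inorder t)" "find t x = Node l x r" "y \<in> set_tree l"
  shows "find t y = find l y"
proof -
  have "distinct (inorder (Node l x r))" using distinct_find[OF assms(1), of x] assms(2) by simp
  have "find t y = find (Node l x r) y" using find_find[OF assms(1), of y x] assms(2,3) by simp
  also have "\<dots> = find l y" by (rule find_Node_left) fact+
  finally show ?thesis .
qed

lemma find_in_right:
  assumes "distinct (inorder t)" "find t x = Node l x r" "y \<in> set_tree r"
  shows "find t y = find r y"
proof -
  have "distinct (inorder (Node l x r))" using distinct_find[OF assms(1), of x] assms(2) by simp
  have "find t y = find (Node l x r) y" using find_find[OF assms(1), of y x] assms(2,3) by simp
  also have "\<dots> = find r y" by (rule find_Node_right) fact+
  finally show ?thesis .
qed

definition Ssub :: "nat tree \<Rightarrow> nat \<Rightarrow> nat set" where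
  "Ssub t x = set_tree (find t x)"

lemma Ssub_self: "x \<in> set_tree t \<Longrightarrow> x \<in> Ssub t x"
  using find_Node_self[of x t] by (auto simp: Ssub_def)

lemma Ssub_subset: "Ssub t x \<subseteq> set_tree t"
  using set_tree_find_subset by (simp add: Ssub_def)

lemma Ssub_memD: "x \<in> Ssub t y \<Longrightarrow> y \<in> set_tree t"
  by (cases rule: find_cases[of y t]) (auto simp: Ssub_def)

lemma Ssub_trans: "distinct (inorder t) \<Longrightarrow> y \<in> Ssub t x \<Longrightarrow> Ssub t y \<subseteq> Ssub t x"
  using find_find[of t y x] set_tree_find_subset[of "find t x" y] by (simp add: Ssub_def)

lemma Ssub_eq: "x \<in> set_tree t \<Longrightarrow> Ssub t x = insert x (Lsub t x \<union> Rsub t x)"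
  using find_Node_self[of x t] by (auto simp: Ssub_def Lsub_def Rsub_def)

lemma Lsub_subset_Ssub: "Lsub t x \<subseteq> Ssub t x"
  by (auto simp: Lsub_def Ssub_def split: tree.splits)

lemma Rsub_subset_Ssub: "Rsub t x \<subseteq> Ssub t x"
  by (auto simp: Rsub_def Ssub_def split: tree.splits)

lemma Lsub_memD: "y \<in> Lsub t x \<Longrightarrow> x \<in> set_tree t \<and> y \<in> set_tree t"
  using set_tree_find_subset[of t x] by (cases rule: find_cases[of x t]) (auto simp: Lsub_def)

lemma Rsub_memD: "y \<in> Rsub t x \<Longrightarrow> x \<in> set_tree t \<and> y \<in> set_tree t"
  using set_tree_find_subset[of t x] by (cases rule: find_cases[of x t]) (auto simp: Rsub_def)

lemma lc_in_Lsub: "lc t x = Some y \<Longrightarrow> y \<in> Lsub t x"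
  by (cases rule: find_cases[of x t]) (auto simp: lc_def Lsub_def elim: root_of.elims)

lemma rc_in_Rsub: "rc t x = Some y \<Longrightarrow> y \<in> Rsub t x"
  by (cases rule: find_cases[of x t]) (auto simp: rc_def Rsub_def elim: root_of.elims)

lemma lc_memD: "lc t x = Some y \<Longrightarrow> x \<in> set_tree t \<and> y \<in> set_tree t"
  using lc_in_Lsub Lsub_memD by blast

lemma rc_memD: "rc t x = Some y \<Longrightarrow> x \<in> set_tree t \<and> y \<in> set_tree t"
  using rc_in_Rsub Rsub_memD by blast

lemma lc_eq_None_iff: "lc t x = None \<longleftrightarrow> Lsub t x = {}"
  by (cases rule: find_cases[of x t]) (auto simp: lc_def Lsub_def elim: root_of.elims)

lemma rc_eq_None_iff: "rc t x = None \<longleftrightarrow> Rsub t x = {}"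
  by (cases rule: find_cases[of x t]) (auto simp: rc_def Rsub_def elim: root_of.elims)

lemma Lsub_trans: "distinct (inorder t) \<Longrightarrow> y \<in> Lsub t x \<Longrightarrow> Ssub t y \<subseteq> Lsub t x"
  using find_Node_self[of x t] Lsub_memD[of y t x] find_in_left[of t x _ _ y]
    set_tree_find_subset[of _ y]
  by (fastforce simp: Ssub_def Lsub_def)

lemma Rsub_trans: "distinct (inorder t) \<Longrightarrow> y \<in> Rsub t x \<Longrightarrow> Ssub t y \<subseteq> Rsub t x"
  using find_Node_self[of x t] Rsub_memD[of y t x] find_in_right[of t x _ _ y]
    set_tree_find_subset[of _ y]
  by (fastforce simp: Ssub_def Rsub_def)

lemma Ssub_lc: "distinct (inorder t) \<Longrightarrow> lc t x = Some y \<Longrightarrow> Ssub t y = Lsub t x"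
  using find_Node_self[of x t] lc_memD[of t x y] find_in_left[of t x _ _ y]
  by (fastforce simp: Ssub_def Lsub_def lc_def elim: root_of.elims)

lemma Ssub_rc: "distinct (inorder t) \<Longrightarrow> rc t x = Some y \<Longrightarrow> Ssub t y = Rsub t x"
  using find_Node_self[of x t] rc_memD[of t x y] find_in_right[of t x _ _ y]
  by (fastforce simp: Ssub_def Rsub_def rc_def elim: root_of.elims)

lemma self_notin_Lsub: "distinct (inorder t) \<Longrightarrow> x \<notin> Lsub t x"
  using distinct_find[of t x] by (cases rule: find_cases[of x t]) (auto simp: Lsub_def)

lemma self_notin_Rsub: "distinct (inorder t) \<Longrightarrow> x \<notin> Rsub t x"
  using distinct_find[of t x] by (cases rule: find_cases[of x t]) (auto simp: Rsub_def)

lemma Lsub_Rsub_disjoint: "distinct (inorder t) \<Longrightarrow> Lsub t x \<inter> Rsub t x = {}"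
  using distinct_find[of t x] by (cases rule: find_cases[of x t]) (auto simp: Lsub_def Rsub_def)

lemma Ssub_antisym: "distinct (inorder t) \<Longrightarrow> x \<in> Ssub t y \<Longrightarrow> y \<in> Ssub t x \<Longrightarrow> x = y"
proof (rule ccontr)
  assume d: "distinct (inorder t)" and xy: "x \<in> Ssub t y" and yx: "y \<in> Ssub t x" and "x \<noteq> y"
  then have "x \<in> Lsub t y \<or> x \<in> Rsub t y" using Ssub_eq[OF Ssub_memD[OF xy]] by blast
  then have "y \<in> Lsub t y \<or> y \<in> Rsub t y" using Lsub_trans[OF d] Rsub_trans[OF d] yx by blast
  then show False using self_notin_Lsub[OF d] self_notin_Rsub[OF d] by blast
qed

definition child :: "nat tree \<Rightarrow> nat \<Rightarrow> nat \<Rightarrow> bool" where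
  "child t w z \<longleftrightarrow> lc t w = Some z \<or> rc t w = Some z"

lemma child_memD: "child t w z \<Longrightarrow> w \<in> set_tree t \<and> z \<in> set_tree t"
  unfolding child_def using lc_memD rc_memD by blast

lemma child_in_Lsub_or_Rsub: "child t w z \<Longrightarrow> z \<in> Lsub t w \<or> z \<in> Rsub t w"
  unfolding child_def using lc_in_Lsub rc_in_Rsub by blast

lemma child_Node:
  assumes "distinct (inorder (Node l a r))"
  shows "child (Node l a r) w z \<longleftrightarrow> (w = a \<and> (root_of l = Some z \<or> root_of r = Some z))
    \<or> (w \<in> set_tree l \<and> child l w z) \<or> (w \<in> set_tree r \<and> child r w z)"
proof -
  have "child (Node l a r) w z \<longleftrightarrow> child s w z" if "find (Node l a r) w = find s w" for s
    using that by (simp add: child_def lc_def rc_def)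
  then show ?thesis
    using find_Node_left[OF assms, of w] find_Node_right[OF assms, of w] child_memD[of _ w z] assms
    by (auto simp: child_def lc_def rc_def)
qed

lemma Ssub_child: "distinct (inorder t) \<Longrightarrow> child t x y \<Longrightarrow> Ssub t y \<subseteq> Ssub t x"
  unfolding child_def using Ssub_lc Ssub_rc Lsub_subset_Ssub Rsub_subset_Ssub by blast

lemma parent_notin_Ssub: "distinct (inorder t) \<Longrightarrow> child t x y \<Longrightarrow> x \<notin> Ssub t y"
proof
  assume d: "distinct (inorder t)" and c: "child t x y" and "x \<in> Ssub t y"
  moreover have "y \<in> Ssub t x"
    using child_in_Lsub_or_Rsub[OF c] Lsub_subset_Ssub Rsub_subset_Ssub by blast
  ultimately have "x = y" using Ssub_antisym[OF d] by blast
  then show False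
    using child_in_Lsub_or_Rsub[OF c] self_notin_Lsub[OF d] self_notin_Rsub[OF d] by blast
qed

lemma Ssub_child_psubset:
  assumes "distinct (inorder t)" and "child t x y"
  shows "Ssub t y \<subset> Ssub t x"
proof -
  have "x \<in> Ssub t x" using Ssub_self child_memD[OF assms(2)] by blast
  then show ?thesis using Ssub_child[OF assms] parent_notin_Ssub[OF assms] by blast
qed

lemma child_not_root:
  assumes d: "distinct (inorder t)" and c: "child t w z"
  shows "root_of t \<noteq> Some z"
proof (cases t)
  case (Node l a r)
  then have "w \<in> Ssub t a" using child_memD[OF c] by (simp add: Ssub_def)
  then show ?thesis using Node parent_notin_Ssub[OF d c] by auto
qed simp

lemma parent_exists:
  "distinct (inorder t) \<Longrightarrow> z \<in> set_tree t \<Longrightarrow> root_of t \<noteq> Some z \<Longrightarrow> \<exists>w. child t w z"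
proof (induction t)
  case (Node l a r)
  note child_iff = child_Node[OF Node.prems(1), of _ z]
  have "z \<in> set_tree l \<or> z \<in> set_tree r" using Node.prems by auto
  then show ?case
  proof
    assume "z \<in> set_tree l"
    then show ?thesis
      using Node.IH(1) Node.prems(1) child_iff child_memD[of l _ z]
      by (cases "root_of l = Some z") auto
  next
    assume "z \<in> set_tree r"
    then show ?thesis
      using Node.IH(2) Node.prems(1) child_iff child_memD[of r _ z]
      by (cases "root_of r = Some z") auto
  qed
qed simp

lemma child_find:
  "distinct (inorder t) \<Longrightarrow> w \<in> set_tree (find t x) \<Longrightarrow> child (find t x) w z = child t w z"
  using find_find[of t w x] by (simp add: child_def lc_def rc_def)

lemma parent_in_Ssub:
  assumes d: "distinct (inorder t)" and z: "z \<in> Ssub t x" "z \<noteq> x"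
  shows "\<exists>w\<in>Ssub t x. child t w z"
proof -
  obtain l r where f: "find t x = Node l x r"
    using Ssub_memD[OF z(1)] by (cases rule: find_cases[of x t]) auto
  obtain w where w: "child (find t x) w z"
    using parent_exists[of "find t x" z] distinct_find[OF d, of x] z f by (auto simp: Ssub_def)
  then show ?thesis using child_find[OF d] child_memD[OF w] by (auto simp: Ssub_def)
qed

lemma parent_unique: "distinct (inorder t) \<Longrightarrow> child t w z \<Longrightarrow> child t w' z \<Longrightarrow> w = w'"
proof (induction t)
  case (Node l a r)
  have d: "distinct (inorder l)" "distinct (inorder r)" "set_tree l \<inter> set_tree r = {}"
    using Node.prems(1) by auto
  have root: "root_of s = Some x \<Longrightarrow> x \<in> set_tree s" for s x by (cases s) auto
  show ?case
    using child_Node[OF Node.prems(1)] Node.prems(2,3) Node.IH d root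
      child_memD[of l _ z] child_memD[of r _ z] child_not_root[OF d(1)] child_not_root[OF d(2)]
    by (smt (verit) disjoint_iff)
qed (simp add: child_def lc_def rc_def)

lemma lc_parent_unique:
  "distinct (inorder t) \<Longrightarrow> lc t q = Some z \<Longrightarrow> lc t q' = Some z \<Longrightarrow> q = q'"
  using parent_unique[of t q z q'] by (simp add: child_def)

lemma rc_parent_unique:
  "distinct (inorder t) \<Longrightarrow> rc t q = Some z \<Longrightarrow> rc t q' = Some z \<Longrightarrow> q = q'"
  using parent_unique[of t q z q'] by (simp add: child_def)

lemma lc_rc_disjoint: "distinct (inorder t) \<Longrightarrow> lc t w = Some z \<Longrightarrow> rc t w' = Some z \<Longrightarrow> False"
  using parent_unique[of t w z w'] lc_in_Lsub rc_in_Rsub Lsub_Rsub_disjoint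
  by (fastforce simp: child_def)

lemma depth_less: "distinct (inorder t) \<Longrightarrow> a \<in> Ssub t j \<Longrightarrow> a \<noteq> j \<Longrightarrow> depth t j < depth t a"
proof -
  assume d: "distinct (inorder t)" and a: "a \<in> Ssub t j" and ne: "a \<noteq> j"
  let ?A = "{b \<in> set_tree t. b \<noteq> j \<and> j \<in> Ssub t b}"
  let ?B = "{b \<in> set_tree t. b \<noteq> a \<and> a \<in> Ssub t b}"
  have "?A \<subseteq> ?B" using Ssub_trans[OF d] Ssub_antisym[OF d] a ne by blast
  moreover have "j \<in> ?B - ?A" using Ssub_memD[OF a] a ne by simp
  ultimately have "card ?A < card ?B" by (intro psubset_card_mono) auto
  then show ?thesis by (simp add: depth_def Ssub_def)
qed

section \<open>Mirror images\<close>

lemma set_tree_mirror [simp]: "set_tree (mirror t) = set_tree t"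
  by (induction t) auto

lemma root_of_mirror [simp]: "root_of (mirror t) = root_of t"
  by (cases t) auto

lemma distinct_inorder_mirror [simp]: "distinct (inorder (mirror t)) \<longleftrightarrow> distinct (inorder t)"
  by (simp add: inorder_mirror)

lemma find_mirror: "distinct (inorder t) \<Longrightarrow> find (mirror t) x = mirror (find t x)"
proof (induction t)
  case (Node l a r)
  then show ?case
    using find_eq_Leaf_iff[of l x] find_eq_Leaf_iff[of r x] by (cases "x \<in> set_tree l") auto
qed simp

lemma lc_mirror: "distinct (inorder t) \<Longrightarrow> lc (mirror t) x = rc t x"
  by (cases rule: find_cases[of x t]) (auto simp: lc_def rc_def find_mirror)

lemma rc_mirror: "distinct (inorder t) \<Longrightarrow> rc (mirror t) x = lc t x"
  by (cases rule: find_cases[of x t]) (auto simp: lc_def rc_def find_mirror)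

lemma Lsub_mirror: "distinct (inorder t) \<Longrightarrow> Lsub (mirror t) x = Rsub t x"
  by (cases rule: find_cases[of x t]) (auto simp: Lsub_def Rsub_def find_mirror)

lemma Rsub_mirror: "distinct (inorder t) \<Longrightarrow> Rsub (mirror t) x = Lsub t x"
  by (cases rule: find_cases[of x t]) (auto simp: Lsub_def Rsub_def find_mirror)

lemma par_mirror: "distinct (inorder t) \<Longrightarrow> par (mirror t) x = par t x"
  by (simp add: par_def lc_mirror rc_mirror disj_commute)

lemma lcit_mirror: "distinct (inorder t) \<Longrightarrow> lcit (mirror t) i l = rcit t i l"
  by (induction l) (auto simp: lc_mirror split: option.splits)

lemma rcit_mirror: "distinct (inorder t) \<Longrightarrow> rcit (mirror t) i l = lcit t i l"
  by (induction l) (auto simp: rc_mirror split: option.splits)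

lemma BL'_mirror: "distinct (inorder t) \<Longrightarrow> BL' (mirror t) e i = BR' t e i"
  by (simp add: BL'_def BR'_def lcit_mirror)

lemma AR_mirror: "distinct (inorder t) \<Longrightarrow> AR (mirror t) e i = AL t e i"
  by (simp add: AR_def AL_def rcit_mirror)

lemma depth_mirror: "distinct (inorder t) \<Longrightarrow> depth (mirror t) = depth t"
  by (simp add: depth_def find_mirror fun_eq_iff)

lemma aR_mirror: "distinct (inorder t) \<Longrightarrow> aR (mirror t) e i = aL t e i"
  by (simp add: aR_def aL_def AR_mirror depth_mirror)

lemma Yset_mirror: "distinct (inorder P) \<Longrightarrow> Yset (mirror P) e = Y'set P e"
  by (simp add: Yset_def Y'set_def lc_mirror rc_mirror par_mirror AR_mirror BL'_mirror aR_mirror)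

lemma Xset_mirror: "distinct (inorder P) \<Longrightarrow> Xset (mirror P) = Xset P"
  by (simp add: Xset_def lc_mirror rc_mirror conj_commute)

lemma contains_mirror:
  "distinct (inorder T) \<Longrightarrow> distinct (inorder P) \<Longrightarrow>
    contains (mirror T) (mirror P) e \<longleftrightarrow> contains T P e"
  by (simp add: contains_def lc_mirror rc_mirror Lsub_mirror Rsub_mirror conj_commute)

section \<open>Occurrences\<close>

text \<open>Occurrence maps without the injectivity required by \<^const>\<open>contains\<close>; it is
  automatic, see \<open>inj_on_occurrence\<close>.\<close>

definition occurrence :: "nat tree \<Rightarrow> nat tree \<Rightarrow> (nat \<Rightarrow> bool) \<Rightarrow> (nat \<Rightarrow> nat) \<Rightarrow> bool" where
  "occurrence T P e f \<longleftrightarrow> f ` set_tree P \<subseteq> set_tree T \<and>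
     (\<forall>p j. lc P p = Some j \<longrightarrow>
        (if e j then lc T (f p) = Some (f j) else f j \<in> Lsub T (f p))) \<and>
     (\<forall>p j. rc P p = Some j \<longrightarrow>
        (if e j then rc T (f p) = Some (f j) else f j \<in> Rsub T (f p)))"

lemma occurrenceI:
  assumes "f ` set_tree P \<subseteq> set_tree T"
    and "\<And>p j. lc P p = Some j \<Longrightarrow> if e j then lc T (f p) = Some (f j) else f j \<in> Lsub T (f p)"
    and "\<And>p j. rc P p = Some j \<Longrightarrow> if e j then rc T (f p) = Some (f j) else f j \<in> Rsub T (f p)"
  shows "occurrence T P e f"
  using assms by (simp add: occurrence_def)

lemma occurrence_in_set_tree: "occurrence T P e f \<Longrightarrow> x \<in> set_tree P \<Longrightarrow> f x \<in> set_tree T"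
  unfolding occurrence_def by blast

lemma occurrence_lc:
  "occurrence T P e f \<Longrightarrow> lc P p = Some j \<Longrightarrow>
    if e j then lc T (f p) = Some (f j) else f j \<in> Lsub T (f p)"
  unfolding occurrence_def by blast

lemma occurrence_rc:
  "occurrence T P e f \<Longrightarrow> rc P p = Some j \<Longrightarrow>
    if e j then rc T (f p) = Some (f j) else f j \<in> Rsub T (f p)"
  unfolding occurrence_def by blast

lemma occurrence_Lsub: "occurrence T P e f \<Longrightarrow> lc P p = Some j \<Longrightarrow> f j \<in> Lsub T (f p)"
  using occurrence_lc[of T P e f p j] lc_in_Lsub by (auto split: if_splits)

lemma occurrence_Rsub: "occurrence T P e f \<Longrightarrow> rc P p = Some j \<Longrightarrow> f j \<in> Rsub T (f p)"
  using occurrence_rc[of T P e f p j] rc_in_Rsub by (auto split: if_splits)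

lemma occurrence_mono:
  assumes occ: "occurrence T P e f" and e': "\<And>j. e' j \<Longrightarrow> e j"
  shows "occurrence T P e' f"
proof (rule occurrenceI)
  show "f ` set_tree P \<subseteq> set_tree T" using occ by (simp add: occurrence_def)
next
  fix p j
  show "lc P p = Some j \<Longrightarrow> if e' j then lc T (f p) = Some (f j) else f j \<in> Lsub T (f p)"
    using occurrence_lc[OF occ] occurrence_Lsub[OF occ] e' by auto
  show "rc P p = Some j \<Longrightarrow> if e' j then rc T (f p) = Some (f j) else f j \<in> Rsub T (f p)"
    using occurrence_rc[OF occ] occurrence_Rsub[OF occ] e' by auto
qed

lemma occurrence_Ssub:
  assumes dT: "distinct (inorder T)" and dP: "distinct (inorder P)" and occ: "occurrence T P e f"
  shows "x \<in> set_tree P \<Longrightarrow> f ` Ssub P x \<subseteq> Ssub T (f x) \<and> inj_on f (Ssub P x)"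
proof (induction "card (Ssub P x)" arbitrary: x rule: less_induct)
  case less
  have IH: "f ` Ssub P c \<subseteq> Ssub T (f c) \<and> inj_on f (Ssub P c)" if "child P x c" for c
  proof -
    have "Ssub P c \<subset> Ssub P x" using Ssub_child_psubset[OF dP that] .
    then have "card (Ssub P c) < card (Ssub P x)"
      by (rule psubset_card_mono[OF finite_subset[OF Ssub_subset finite_set_tree]])
    then show ?thesis using less.hyps child_memD[OF that] by blast
  qed
  have L: "f ` Lsub P x \<subseteq> Lsub T (f x) \<and> inj_on f (Lsub P x)"
  proof (cases "lc P x")
    case (Some c)
    then show ?thesis
      using IH[of c] Ssub_lc[OF dP Some] Lsub_trans[OF dT occurrence_Lsub[OF occ Some]]
      by (auto simp: child_def)
  qed (simp add: lc_eq_None_iff)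
  have R: "f ` Rsub P x \<subseteq> Rsub T (f x) \<and> inj_on f (Rsub P x)"
  proof (cases "rc P x")
    case (Some c)
    then show ?thesis
      using IH[of c] Ssub_rc[OF dP Some] Rsub_trans[OF dT occurrence_Rsub[OF occ Some]]
      by (auto simp: child_def)
  qed (simp add: rc_eq_None_iff)
  have fx: "f x \<in> set_tree T" using occurrence_in_set_tree[OF occ less.prems] .
  have disj: "f ` Lsub P x \<inter> f ` Rsub P x = {}" "f x \<notin> f ` Lsub P x \<union> f ` Rsub P x"
    using L R Lsub_Rsub_disjoint[OF dT, of "f x"] self_notin_Lsub[OF dT, of "f x"]
      self_notin_Rsub[OF dT, of "f x"] by blast+
  have "inj_on f (insert x (Lsub P x \<union> Rsub P x))"
    using L R disj by (auto simp: inj_on_Un)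
  moreover have "f ` insert x (Lsub P x \<union> Rsub P x) \<subseteq> insert (f x) (Lsub T (f x) \<union> Rsub T (f x))"
    using L R by blast
  ultimately show ?case using Ssub_eq[OF less.prems] Ssub_eq[OF fx] by simp
qed

lemma inj_on_occurrence:
  assumes "distinct (inorder T)" "distinct (inorder P)" "occurrence T P e f"
  shows "inj_on f (set_tree P)"
proof (cases P)
  case (Node l r a)
  then have "Ssub P r = set_tree P" by (simp add: Ssub_def)
  then show ?thesis using occurrence_Ssub[OF assms, of r] Node by simp
qed simp

lemma contains_iff_inj_occurrence:
  "contains T P e \<longleftrightarrow> (\<exists>f. inj_on f (set_tree P) \<and> occurrence T P e f)"
  unfolding contains_def occurrence_def
  by (intro ex_cong1 conj_cong refl) (auto dest: lc_memD rc_memD)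

lemma contains_iff_occurrence:
  "distinct (inorder T) \<Longrightarrow> distinct (inorder P) \<Longrightarrow> contains T P e \<longleftrightarrow> (\<exists>f. occurrence T P e f)"
  using contains_iff_inj_occurrence inj_on_occurrence by blast

lemma contains_mono: "contains T P e \<Longrightarrow> (\<And>j. e' j \<Longrightarrow> e j) \<Longrightarrow> contains T P e'"
  using contains_iff_inj_occurrence occurrence_mono by metis

section \<open>Contiguous chains\<close>

fun iter_child :: "(nat \<Rightarrow> nat option) \<Rightarrow> nat \<Rightarrow> nat \<Rightarrow> nat option" where
  "iter_child c i 0 = Some i"
| "iter_child c i (Suc l) = Option.bind (iter_child c i l) c"

lemma lcit_eq_iter_child: "lcit t i l = iter_child (lc t) i l"
  by (induction l) (auto split: option.splits)

lemma rcit_eq_iter_child: "rcit t i l = iter_child (rc t) i l"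
  by (induction l) (auto split: option.splits)

lemma iter_child_Suc: "iter_child c i (Suc l) = Option.bind (c i) (\<lambda>k. iter_child c k l)"
  by (induction l) (auto split: option.splits)

lemma ball_atLeastAtMost_Suc: "(\<forall>m\<in>{1..Suc l}. Q m) \<longleftrightarrow> Q 1 \<and> (\<forall>m\<in>{1..l}. Q (Suc m))"
  by (auto simp: Ball_def) (metis One_nat_def Suc_le_D Suc_le_mono le_SucE)

inductive chain :: "(nat \<Rightarrow> nat option) \<Rightarrow> (nat \<Rightarrow> bool) \<Rightarrow> nat \<Rightarrow> nat \<Rightarrow> bool"
  for c :: "nat \<Rightarrow> nat option" and e :: "nat \<Rightarrow> bool" where
  chain_refl: "chain c e i i"
| chain_step: "c i = Some k \<Longrightarrow> e k \<Longrightarrow> chain c e k j \<Longrightarrow> chain c e i j"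

lemma chain_iff_iter_child:
  "chain c e i j \<longleftrightarrow> (\<exists>l. iter_child c i l = Some j \<and> (\<forall>m\<in>{1..l}. e (the (iter_child c i m))))"
proof
  assume "chain c e i j"
  then show "\<exists>l. iter_child c i l = Some j \<and> (\<forall>m\<in>{1..l}. e (the (iter_child c i m)))"
  proof induction
    case (chain_refl i)
    show ?case by (rule exI[of _ 0]) simp
  next
    case (chain_step i k j)
    then obtain l where "iter_child c k l = Some j" "\<forall>m\<in>{1..l}. e (the (iter_child c k m))"
      by blast
    then show ?case
      using chain_step.hyps by (intro exI[of _ "Suc l"], unfold ball_atLeastAtMost_Suc)
        (simp add: iter_child_Suc del: iter_child.simps(2))
  qed
next
  assume "\<exists>l. iter_child c i l = Some j \<and> (\<forall>m\<in>{1..l}. e (the (iter_child c i m)))"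
  then obtain l where "iter_child c i l = Some j" "\<forall>m\<in>{1..l}. e (the (iter_child c i m))"
    by blast
  then show "chain c e i j"
  proof (induction l arbitrary: i)
    case 0
    then show ?case by (simp add: chain_refl)
  next
    case (Suc l)
    have "Option.bind (c i) (\<lambda>k. iter_child c k l) = Some j"
      using Suc.prems(1) by (simp only: iter_child_Suc)
    then obtain k where k: "c i = Some k" "iter_child c k l = Some j" by (cases "c i") auto
    moreover have "e k" "\<forall>m\<in>{1..l}. e (the (iter_child c k m))"
      using Suc.prems(2) k unfolding ball_atLeastAtMost_Suc
      by (simp_all add: iter_child_Suc del: iter_child.simps(2))
    ultimately show ?case using Suc.IH by (blast intro: chain_step)
  qed
qed

lemma BL'_eq: "BL' P e i = {j. chain (lc P) e i j}"
  by (simp add: BL'_def lcit_eq_iter_child chain_iff_iter_child)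

lemma AR_eq: "AR P e p = {a \<in> set_tree P. chain (rc P) e a p}"
  by (simp add: AR_def rcit_eq_iter_child chain_iff_iter_child)

lemma AR_eq_chain: "p \<in> set_tree P \<Longrightarrow> AR P e p = {a. chain (rc P) e a p}"
  by (auto simp: AR_eq dest: rc_memD elim: chain.cases)

lemma chain_snoc: "chain c e i q \<Longrightarrow> c q = Some j \<Longrightarrow> e j \<Longrightarrow> chain c e i j"
  by (induction rule: chain.induct) (auto intro: chain.intros)

lemma chain_last: "chain c e i j \<Longrightarrow> j \<noteq> i \<Longrightarrow> \<exists>q. chain c e i q \<and> c q = Some j \<and> e j"
  by (induction rule: chain.induct) (auto intro: chain.intros)

lemma chain_Ssub:
  assumes "distinct (inorder t)" and "\<And>x y. c x = Some y \<Longrightarrow> child t x y"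
  shows "chain c e i j \<Longrightarrow> i \<in> set_tree t \<Longrightarrow> j \<in> Ssub t i"
  by (induction rule: chain.induct)
    (use assms Ssub_self Ssub_child child_memD in blast)+

lemma lc_chain_Ssub: "distinct (inorder t) \<Longrightarrow> chain (lc t) e i j \<Longrightarrow> i \<in> set_tree t \<Longrightarrow> j \<in> Ssub t i"
  by (rule chain_Ssub) (auto simp: child_def)

lemma rc_chain_Ssub: "distinct (inorder t) \<Longrightarrow> chain (rc t) e i j \<Longrightarrow> i \<in> set_tree t \<Longrightarrow> j \<in> Ssub t i"
  by (rule chain_Ssub) (auto simp: child_def)

lemma rc_chain_below_left_child:
  assumes d: "distinct (inorder P)" and q: "lc P q = Some j"
  shows "chain (rc P) e a b \<Longrightarrow> b \<in> Ssub P j \<Longrightarrow> a \<in> Ssub P j"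
proof (induction rule: chain.induct)
  case (chain_step a a2 b)
  have "a2 \<noteq> j" using lc_rc_disjoint[OF d q] chain_step.hyps(1) by blast
  then obtain w where "w \<in> Ssub P j" "child P w a2"
    using parent_in_Ssub[OF d chain_step.IH[OF chain_step.prems]] by blast
  then show ?case using parent_unique[OF d, of w a2 a] chain_step.hyps(1) by (simp add: child_def)
qed

lemma aR_eq_left_child:
  assumes d: "distinct (inorder P)" and q: "lc P q = Some j" and j: "chain (rc P) e j p"
  shows "aR P e p = j"
proof -
  have jA: "j \<in> AR P e p" using AR_eq lc_memD[OF q] j by simp
  have "aR P e p \<in> AR P e p" unfolding aR_def using jA by (rule arg_min_natI)
  moreover have "depth P (aR P e p) \<le> depth P j" unfolding aR_def using jA by (rule arg_min_nat_le)
  moreover have "p \<in> Ssub P j" using rc_chain_Ssub[OF d j] lc_memD[OF q] by blast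
  then have "a \<in> AR P e p \<Longrightarrow> a \<noteq> j \<Longrightarrow> depth P j < depth P a" for a
    using rc_chain_below_left_child[OF d q, of e a p] depth_less[OF d, of a j] by (simp add: AR_eq)
  ultimately show ?thesis by fastforce
qed

section \<open>Making a right edge contiguous\<close>

lemma occurrence_make_rc_contiguous:
  assumes dP: "distinct (inorder P)" and occ: "occurrence T P e f"
    and pi: "rc P p = Some i" and t: "rc T (f p) = Some (f i)"
  shows "occurrence T P (e(i := True)) f"
proof (rule occurrenceI)
  show "f ` set_tree P \<subseteq> set_tree T" using occ by (simp add: occurrence_def)
next
  fix q j assume qj: "lc P q = Some j"
  then have "j \<noteq> i" using lc_rc_disjoint[OF dP qj] pi by blast
  then show "if (e(i := True)) j then lc T (f q) = Some (f j) else f j \<in> Lsub T (f q)"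
    using occurrence_lc[OF occ qj] by simp
next
  fix q j assume qj: "rc P q = Some j"
  have "j = i \<Longrightarrow> q = p" using rc_parent_unique[OF dP] qj pi by blast
  then show "if (e(i := True)) j then rc T (f q) = Some (f j) else f j \<in> Rsub T (f q)"
    using occurrence_rc[OF occ qj] t by auto
qed

lemma occurrence_lift_lc_chain:
  assumes dP: "distinct (inorder P)" and dT: "distinct (inorder T)" and occ: "occurrence T P e f"
    and ne: "\<not> e i" and pi: "rc P p = Some i" and B: "\<And>j. chain (lc P) e i j \<Longrightarrow> rc P j = None"
    and w: "lc T w = Some (f i)" and wR: "w \<in> Rsub T (f p)"
  shows "\<exists>g. occurrence T P e g \<and> g i = w \<and> g p = f p"
proof -
  let ?B = "chain (lc P) e i"
  define g where "g x = (if ?B x then THE u. lc T u = Some (f x) else f x)" for x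
  have parent_B: "\<exists>q. ?B q \<and> lc P q = Some j \<and> e j" if "?B j" "j \<noteq> i" for j
    using chain_last that by blast
  have lc_g: "lc T (g b) = Some (f b)" if b: "?B b" for b
  proof -
    obtain u where u: "lc T u = Some (f b)"
      using w occurrence_lc[OF occ] parent_B[OF b] by (cases "b = i") force+
    then have "(THE u. lc T u = Some (f b)) = u" using lc_parent_unique[OF dT] by blast
    then show ?thesis using b u by (simp add: g_def)
  qed
  have gi: "g i = w" using lc_parent_unique[OF dT lc_g[OF chain_refl] w] .
  have "\<not> ?B p"
    using lc_chain_Ssub[OF dP _ rc_memD[OF pi, THEN conjunct2]] parent_notin_Ssub[OF dP] pi
    by (auto simp: child_def)
  then have gp: "g p = f p" by (simp add: g_def)
  have "occurrence T P e g"
  proof (rule occurrenceI)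
    show "g ` set_tree P \<subseteq> set_tree T"
      using occurrence_in_set_tree[OF occ] lc_memD[OF lc_g] by (auto simp: g_def)
  next
    fix q j assume qj: "lc P q = Some j"
    have ji: "j \<noteq> i" using lc_rc_disjoint[OF dP qj] pi by blast
    show "if e j then lc T (g q) = Some (g j) else g j \<in> Lsub T (g q)"
    proof (cases "?B q")
      case qB: True
      show ?thesis
      proof (cases "e j")
        case True
        then have jB: "?B j" using chain_snoc[OF qB qj] by blast
        have "lc T (f q) = Some (f j)" using occurrence_lc[OF occ qj] True by simp
        then have "g j = f q" using lc_parent_unique[OF dT lc_g[OF jB]] by blast
        then show ?thesis using True lc_g[OF qB] by (simp add: g_def)
      next
        case False
        then have "\<not> ?B j" using parent_B ji by blast
        moreover have "f j \<in> Lsub T (g q)"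
          using occurrence_Lsub[OF occ qj] Ssub_lc[OF dT lc_g[OF qB]] Lsub_subset_Ssub by blast
        ultimately show ?thesis using False by (simp add: g_def)
      qed
    next
      case qB: False
      then have "\<not> ?B j" using parent_B ji lc_parent_unique[OF dP _ qj] by blast
      then show ?thesis using occurrence_lc[OF occ qj] qB by (simp add: g_def)
    qed
  next
    fix q j assume qj: "rc P q = Some j"
    have "j = i \<Longrightarrow> q = p" using rc_parent_unique[OF dP] qj pi by blast
    moreover have "?B j \<Longrightarrow> j = i" using parent_B lc_rc_disjoint[OF dP _ qj] by blast
    ultimately show "if e j then rc T (g q) = Some (g j) else g j \<in> Rsub T (g q)"
      using occurrence_rc[OF occ qj] B[of q] qj ne gi gp wR by (cases "?B q") (auto simp: g_def)
  qed
  then show ?thesis using gi gp by blast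
qed

lemma occurrence_move_to_rc_parent:
  assumes dP: "distinct (inorder P)" and dT: "distinct (inorder T)" and occ: "occurrence T P e f"
    and pi: "rc P p = Some i" and lp: "lc P p = None" and p_top: "Some p = root_of P \<or> \<not> e p"
    and w: "rc T w = Some (f i)" and wR: "w \<in> Rsub T (f p)"
  shows "occurrence T P (e(i := True)) (f(p := w))"
proof -
  have ip: "i \<noteq> p" using rc_in_Rsub[OF pi] self_notin_Rsub[OF dP] by auto
  have wS: "w \<in> Ssub T (f p)" using wR Rsub_subset_Ssub by blast
  have top: "\<not> e p" if "child P q p" for q using p_top child_not_root[OF dP that] by auto
  show ?thesis
  proof (rule occurrenceI)
    show "(f(p := w)) ` set_tree P \<subseteq> set_tree T"
      using occurrence_in_set_tree[OF occ] Rsub_memD[OF wR] by auto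
  next
    fix q j assume qj: "lc P q = Some j"
    have "j \<noteq> i" using lc_rc_disjoint[OF dP qj] pi by blast
    moreover have "q \<noteq> p" using qj lp by auto
    moreover have "j = p \<Longrightarrow> \<not> e p \<and> w \<in> Lsub T (f q)"
      using top[of q] qj Lsub_trans[OF dT occurrence_Lsub[OF occ qj]] wS by (auto simp: child_def)
    ultimately show "if (e(i := True)) j then lc T ((f(p := w)) q) = Some ((f(p := w)) j)
      else (f(p := w)) j \<in> Lsub T ((f(p := w)) q)"
      using occurrence_lc[OF occ qj] by auto
  next
    fix q j assume qj: "rc P q = Some j"
    have "j = i \<longleftrightarrow> q = p" using rc_parent_unique[OF dP] qj pi by auto
    moreover have "j = p \<Longrightarrow> \<not> e p \<and> w \<in> Rsub T (f q)"
      using top[of q] qj Rsub_trans[OF dT occurrence_Rsub[OF occ qj]] wS by (auto simp: child_def)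
    ultimately show "if (e(i := True)) j then rc T ((f(p := w)) q) = Some ((f(p := w)) j)
      else (f(p := w)) j \<in> Rsub T ((f(p := w)) q)"
      using occurrence_rc[OF occ qj] w ip by auto
  qed
qed

lemma occurrence_lower_rc_chain:
  assumes dP: "distinct (inorder P)" and dT: "distinct (inorder T)" and occ: "occurrence T P e f"
    and ne: "\<not> e i" and pi: "rc P p = Some i" and A: "\<And>a. chain (rc P) e a p \<Longrightarrow> lc P a = None"
    and top: "\<And>q a. lc P q = Some a \<Longrightarrow> chain (rc P) e a p \<Longrightarrow> \<not> e a"
    and y: "rc T (f p) = Some y" and iy: "f i \<in> Rsub T y"
  shows "\<exists>g. occurrence T P e g \<and> g p = y \<and> g i = f i"
proof -
  let ?A = "\<lambda>a. chain (rc P) e a p"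
  define g where "g x = (if ?A x then the (rc T (f x)) else f x)" for x
  have rc_g: "rc T (f a) = Some (g a)" if a: "?A a" for a
  proof (cases "a = p")
    case False
    then obtain a2 where "rc P a = Some a2" "e a2" using a by (blast elim: chain.cases)
    then show ?thesis using occurrence_rc[OF occ] a by (force simp: g_def)
  qed (use y in \<open>simp add: g_def chain_refl\<close>)
  have gp: "g p = y" using rc_g[OF chain_refl] y by simp
  have "\<not> ?A i"
    using rc_chain_Ssub[OF dP _ rc_memD[OF pi, THEN conjunct2]] parent_notin_Ssub[OF dP] pi
    by (auto simp: child_def)
  then have gi: "g i = f i" by (simp add: g_def)
  have lower: "g a \<in> Ssub T (f a)" if "?A a" for a
    using rc_in_Rsub[OF rc_g[OF that]] Rsub_subset_Ssub by blast
  have "occurrence T P e g"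
  proof (rule occurrenceI)
    show "g ` set_tree P \<subseteq> set_tree T"
      using occurrence_in_set_tree[OF occ] rc_memD[OF rc_g] by (auto simp: g_def)
  next
    fix q j assume qj: "lc P q = Some j"
    have "\<not> ?A q" using A qj by force
    moreover have "?A j \<Longrightarrow> \<not> e j \<and> g j \<in> Lsub T (f q)"
      using top[OF qj] lower Lsub_trans[OF dT occurrence_Lsub[OF occ qj]] by blast
    ultimately show "if e j then lc T (g q) = Some (g j) else g j \<in> Lsub T (g q)"
      using occurrence_lc[OF occ qj] by (auto simp: g_def)
  next
    fix q j assume qj: "rc P q = Some j"
    show "if e j then rc T (g q) = Some (g j) else g j \<in> Rsub T (g q)"
    proof (cases "?A q")
      case qA: True
      show ?thesis
      proof (cases "q = p")
        case True
        then show ?thesis using qj pi ne gi gp iy by simp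
      next
        case False
        then obtain a2 where a2: "rc P q = Some a2" "e a2" "?A a2"
          using qA by (blast elim: chain.cases)
        then have "g q = f j" using rc_g[OF qA] occurrence_rc[OF occ qj] qj by simp
        then show ?thesis using rc_g a2 qj by simp
      qed
    next
      case qA: False
      have "?A j \<Longrightarrow> \<not> e j \<and> g j \<in> Rsub T (f q)"
        using qA chain_step[of "rc P" q j e p] qj lower Rsub_trans[OF dT occurrence_Rsub[OF occ qj]]
        by blast
      then show ?thesis using occurrence_rc[OF occ qj] qA by (auto simp: g_def)
    qed
  qed
  then show ?thesis using gp gi by blast
qed

lemma occurrence_move_to_rc:
  assumes dP: "distinct (inorder P)" and occ: "occurrence T P e f"
    and pi: "rc P p = Some i" and ri: "rc P i = None" and y: "rc T (f p) = Some y"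
    and lc_i: "\<And>c. lc P i = Some c \<Longrightarrow> \<not> e c \<and> f c \<in> Lsub T y"
  shows "occurrence T P (e(i := True)) (f(i := y))"
proof (rule occurrenceI)
  have ip: "i \<noteq> p" using rc_in_Rsub[OF pi] self_notin_Rsub[OF dP] by auto
  show "(f(i := y)) ` set_tree P \<subseteq> set_tree T"
    using occurrence_in_set_tree[OF occ] rc_memD[OF y] by auto
  fix q j
  show "lc P q = Some j \<Longrightarrow> if (e(i := True)) j then lc T ((f(i := y)) q) = Some ((f(i := y)) j)
    else (f(i := y)) j \<in> Lsub T ((f(i := y)) q)"
    using occurrence_lc[OF occ] lc_rc_disjoint[OF dP _ pi] lc_i by (cases "q = i") fastforce+
  have "rc P q = Some i \<Longrightarrow> q = p" using rc_parent_unique[OF dP _ pi] .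
  then show "rc P q = Some j \<Longrightarrow> if (e(i := True)) j then rc T ((f(i := y)) q) = Some ((f(i := y)) j)
    else (f(i := y)) j \<in> Rsub T ((f(i := y)) q)"
    using occurrence_rc[OF occ] ri y ip by (cases "q = i") auto
qed

lemma occurrence_close_rc_by_lifting:
  assumes dP: "distinct (inorder P)" and dT: "distinct (inorder T)"
    and ne: "\<not> e i" and pi: "rc P p = Some i" and lp: "lc P p = None"
    and p_top: "Some p = root_of P \<or> \<not> e p" and B: "\<And>j. chain (lc P) e i j \<Longrightarrow> rc P j = None"
  shows "occurrence T P e f \<Longrightarrow> \<exists>g. occurrence T P (e(i := True)) g"
proof (induction "depth T (f i)" arbitrary: f rule: less_induct)
  case less
  note occ = less.prems
  have fiR: "f i \<in> Rsub T (f p)" using occurrence_Rsub[OF occ pi] .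
  then obtain y where y: "rc T (f p) = Some y" using rc_eq_None_iff by fastforce
  show ?case
  proof (cases "f i = y")
    case True
    then show ?thesis using occurrence_make_rc_contiguous[OF dP occ pi] y by auto
  next
    case False
    have Ry: "Rsub T (f p) = Ssub T y" using Ssub_rc[OF dT y] by simp
    obtain w where w: "w \<in> Rsub T (f p)" "child T w (f i)"
      using parent_in_Ssub[OF dT _ False] fiR Ry by auto
    show ?thesis
    proof (cases "lc T w = Some (f i)")
      case True
      obtain g where g: "occurrence T P e g" "g i = w"
        using occurrence_lift_lc_chain[OF dP dT occ ne pi B True w(1)] by blast
      have "depth T w < depth T (f i)"
        using depth_less[OF dT] Ssub_child_psubset[OF dT w(2)] Ssub_self child_memD[OF w(2)]
        by blast
      then show ?thesis using less.hyps g by auto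
    next
      case False
      then have "rc T w = Some (f i)" using w(2) by (simp add: child_def)
      then show ?thesis using occurrence_move_to_rc_parent[OF dP dT occ pi lp p_top _ w(1)] by blast
    qed
  qed
qed

lemma occurrence_close_rc_by_lowering:
  assumes dP: "distinct (inorder P)" and dT: "distinct (inorder T)"
    and ne: "\<not> e i" and pi: "rc P p = Some i" and ri: "rc P i = None"
    and lc_i: "\<And>c. lc P i = Some c \<Longrightarrow> \<not> e c"
    and A: "\<And>a. chain (rc P) e a p \<Longrightarrow> lc P a = None"
    and a_top: "Some (aR P e p) = root_of P \<or> \<not> e (aR P e p)"
  shows "occurrence T P e f \<Longrightarrow> \<exists>g. occurrence T P (e(i := True)) g"
proof (induction "card (Ssub T (f p))" arbitrary: f rule: less_induct)
  case less
  note occ = less.prems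
  have fiR: "f i \<in> Rsub T (f p)" using occurrence_Rsub[OF occ pi] .
  then obtain y where y: "rc T (f p) = Some y" using rc_eq_None_iff by fastforce
  have "f i \<in> Ssub T y" using fiR Ssub_rc[OF dT y] by simp
  then consider "f i = y" | "f i \<in> Lsub T y" | "f i \<in> Rsub T y"
    using Ssub_eq[OF Ssub_memD] by blast
  then show ?case
  proof cases
    case 1
    then show ?thesis using occurrence_make_rc_contiguous[OF dP occ pi] y by auto
  next
    case 2
    have "f c \<in> Lsub T y" if "lc P i = Some c" for c
      using occurrence_Lsub[OF occ that] Lsub_trans[OF dT 2] Lsub_subset_Ssub by blast
    then show ?thesis using occurrence_move_to_rc[OF dP occ pi ri y] lc_i by blast
  next
    case 3
    have "\<not> e a" if "lc P q = Some a" "chain (rc P) e a p" for q a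
      using a_top aR_eq_left_child[OF dP that] child_not_root[OF dP, of q a] that(1)
      by (auto simp: child_def)
    then obtain g where g: "occurrence T P e g" "g p = y"
      using occurrence_lower_rc_chain[OF dP dT occ ne pi _ _ y 3] A by blast
    have "Ssub T y \<subset> Ssub T (f p)" using Ssub_child_psubset[OF dT] y by (simp add: child_def)
    then have "card (Ssub T (g p)) < card (Ssub T (f p))"
      using g(2) by (simp add: psubset_card_mono[OF finite_subset[OF Ssub_subset finite_set_tree]])
    then show ?thesis using less.hyps g(1) by blast
  qed
qed

lemma occurrence_Yset:
  assumes dP: "distinct (inorder P)" and dT: "distinct (inorder T)"
    and iY: "i \<in> Yset P e" and ne: "\<not> e i" and occ: "occurrence T P e f"
  shows "\<exists>g. occurrence T P (e(i := True)) g"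
proof -
  obtain p where ic: "lc P i \<noteq> None" and pi: "rc P p = Some i"
    and alt: "AR P e p = {p} \<or> BL' P e i = {i}"
    and AL: "\<forall>j\<in>AR P e p. lc P j = None" and BR: "\<forall>j\<in>BL' P e i. rc P j = None"
    and a_top: "Some (aR P e p) = root_of P \<or> \<not> e (aR P e p)"
    using iY unfolding Yset_def by blast
  have AR: "AR P e p = {a. chain (rc P) e a p}" using AR_eq_chain rc_memD[OF pi] by blast
  have A: "lc P a = None" if "chain (rc P) e a p" for a using AL that AR by blast
  have B: "rc P j = None" if "chain (lc P) e i j" for j using BR that by (simp add: BL'_eq)
  show ?thesis
  proof (cases "AR P e p = {p}")
    case True
    have "aR P e p \<in> AR P e p" unfolding aR_def by (rule arg_min_natI[of _ p]) (simp add: True)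
    then have "Some p = root_of P \<or> \<not> e p" using True a_top by auto
    then show ?thesis
      using occurrence_close_rc_by_lifting[OF dP dT ne pi A[OF chain_refl] _ B occ] by blast
  next
    case False
    then have B1: "BL' P e i = {i}" using alt by blast
    have "\<not> e c" if c: "lc P i = Some c" for c
    proof
      assume "e c"
      then have "c \<in> BL' P e i"
        using chain_step[of "lc P" i c e c, OF c _ chain_refl] by (simp add: BL'_eq)
      then show False using B1 lc_in_Lsub[OF c] self_notin_Lsub[OF dP] by auto
    qed
    moreover have "rc P i = None" using BR B1 by blast
    ultimately show ?thesis
      using occurrence_close_rc_by_lowering[OF dP dT ne pi _ _ A a_top occ] by blast
  qed
qed

lemma contains_relax_right:
  assumes dP: "distinct (inorder P)" and dT: "distinct (inorder T)" and ne: "\<not> e i"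
    and i: "i \<in> Yset P e \<or> (i \<in> Xset P \<and> (\<exists>q. rc P q = Some i))"
    and "contains T P e"
  shows "contains T P (e(i := True))"
proof -
  obtain f where occ: "occurrence T P e f" using assms(5) contains_iff_occurrence[OF dT dP] by blast
  have "\<exists>g. occurrence T P (e(i := True)) g"
    using i
  proof
    assume "i \<in> Yset P e"
    then show ?thesis using occurrence_Yset[OF dP dT _ ne occ] by blast
  next
    assume "i \<in> Xset P \<and> (\<exists>q. rc P q = Some i)"
    then obtain q where qi: "rc P q = Some i" and leaf: "lc P i = None" "rc P i = None"
      by (auto simp: Xset_def)
    obtain y where y: "rc T (f q) = Some y"
      using occurrence_Rsub[OF occ qi] rc_eq_None_iff by fastforce
    have "occurrence T P (e(i := True)) (f(i := y))"
      by (rule occurrence_move_to_rc[OF dP occ qi leaf(2) y]) (simp add: leaf(1))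
    then show ?thesis by blast
  qed
  then show ?thesis using contains_iff_occurrence[OF dT dP] by blast
qed

lemma contains_relax:
  assumes dP: "distinct (inorder P)" and dT: "distinct (inorder T)"
    and i: "i \<in> Xset P \<union> Yset P e \<union> Y'set P e" and nr: "Some i \<noteq> root_of P" and ne: "\<not> e i"
    and "contains T P e"
  shows "contains T P (e(i := True))"
proof -
  have "i \<in> set_tree P" using i by (auto simp: Xset_def Yset_def Y'set_def)
  then obtain q where "child P q i" using parent_exists[OF dP] nr by metis
  then have "(i \<in> Yset P e \<or> (i \<in> Xset P \<and> (\<exists>q. rc P q = Some i)))
    \<or> (i \<in> Y'set P e \<or> (i \<in> Xset P \<and> (\<exists>q. lc P q = Some i)))"
    using i by (auto simp: child_def)
  then show ?thesis
  proof
    assume "i \<in> Yset P e \<or> (i \<in> Xset P \<and> (\<exists>q. rc P q = Some i))"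
    then show ?thesis using contains_relax_right[of P T e i] dP dT ne assms(6) by blast
  next
    assume "i \<in> Y'set P e \<or> (i \<in> Xset P \<and> (\<exists>q. lc P q = Some i))"
    then have "i \<in> Yset (mirror P) e \<or> (i \<in> Xset (mirror P) \<and> (\<exists>q. rc (mirror P) q = Some i))"
      by (simp add: Yset_mirror Xset_mirror rc_mirror dP)
    moreover have "contains (mirror T) (mirror P) e"
      using contains_mirror[OF dT dP] assms(6) by simp
    ultimately have "contains (mirror T) (mirror P) (e(i := True))"
      using contains_relax_right[of "mirror P" "mirror T"] dP dT ne by simp
    then show ?thesis using contains_mirror[OF dT dP] by simp
  qed
qed

lemma distinct_inorder_search_tree: "T \<in> search_trees n \<Longrightarrow> distinct (inorder T)"
  by (simp add: search_trees_def)

theorem theorem11: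
  fixes P :: "nat tree" and k :: nat and e :: "nat \<Rightarrow> bool" and i :: nat
  assumes "P \<in> search_trees k"
    and "i \<in> Xset P \<union> Yset P e \<union> Y'set P e"
    and "Some i \<noteq> root_of P"
    and "\<not> e i"
  shows "\<forall>n. avoiders n P e = avoiders n P (e(i := True))"
proof
  fix n
  have "contains T P e \<longleftrightarrow> contains T P (e(i := True))" if "T \<in> search_trees n" for T
    using contains_relax[OF distinct_inorder_search_tree[OF assms(1)]
        distinct_inorder_search_tree[OF that] assms(2-4)]
      contains_mono[of T P "e(i := True)" e] by auto
  then show "avoiders n P e = avoiders n P (e(i := True))"
    unfolding avoiders_def by blast
qed

end
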